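(* Let $(G,L,F)$ be a Stackelberg game and $\mathbf{x}=[x_\pi]\in\mathbf{X}^{PS}$. Then there exists $\mathbf{x}'=[x'_\pi]\in\mathbf{X}^{PS}$ such that $x'_\varnothing=x_\varnothing$ and $x'_{\pi p}=x'_{\pi' p}$ for every $p\in L$ and every $\pi,\pi'\in\Pi_{L\setminus\{p\}}$ having the same set of entries.
   Context: A finite game is $G=(N,\{S_p\}_{p\in N},\{u_p\}_{p\in N})$ with players $N=\{1,\dots,n\}$, finite nonempty strategy sets $S_p$, and utilities $u_p:S\to\mathbb{R}$ on $S=\prod_{p\in N}S_p$; write $s=(s_p,s_{-p})$ with $s_{-p}\in S_{-p}=\prod_{q\neq p}S_q$. $\mathcal{X}=\Delta(S)$ is the set of probability distributions on $S$ and $u_p(x)=\sum_{s\in S}x(s)u_p(s)$ for $x\in\mathcal{X}$. For $P\subseteq N$, $\mathcal{X}^{CE}_P$ is the set of $x\in\mathcal{X}$ such that for every $p\in P$ and all $s_p\neq s_p'\in S_p$: $\sum_{s_{-p}\in S_{-p}} x(s_p,s_{-p})\,(u_p(s_p,s_{-p})-u_p(s_p',s_{-p}))\ge 0$; $\mathcal{X}^{CE}=\mathcal{X}^{CE}_N$ is the set of correlated equilibria of $G$. A Stackelberg game (SG) is a triple $(G,L,F)$ with $L\cup F=N$ and $L\cap F=\emptyset$ (leaders and followers). For $P\subseteq N$, $\Pi_P$ is the set of ordered subsets of $P$ (finite sequences of pairwise distinct elements of $P$, including the empty sequence $\varnothing$); for $\pi\in\Pi_P$ and $p\in P$ not occurring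 in $\pi$, $\pi p$ is $\pi$ with $p$ appended; when used as a set, $\pi$ means its set of entries. $\mathbf{X}=\prod_{\pi\in\Pi_L}\mathcal{X}^{CE}_{\pi\cup F}$, with elements $\mathbf{x}=[x_\pi]_{\pi\in\Pi_L}$. For $\mathbf{x}\in\mathbf{X}$ and $\pi\in\Pi_L$, $x_\pi$ is stable if $u_p(x_\pi)\ge u_p(x_{\pi p})$ for all $p\in L\setminus\pi$; $\mathbf{x}$ is stable if $x_\varnothing$ is stable, and perfectly stable if $x_\pi$ is stable for every $\pi\in\Pi_L$; $\mathbf{X}^{S}$ and $\mathbf{X}^{PS}$ denote the sets of stable and perfectly stable elements of $\mathbf{X}$. *)

theory Defs
  imports "HOL-Analysis.Analysis"
begin

definition finite_game :: "'p set \<Rightarrow> ('p \<Rightarrow> 's set) \<Rightarrow> bool" where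
  "finite_game N S \<longleftrightarrow> finite N \<and> N \<noteq> {} \<and> (\<forall>p\<in>N. finite (S p) \<and> S p \<noteq> {})"

abbreviation profiles :: "'p set \<Rightarrow> ('p \<Rightarrow> 's set) \<Rightarrow> ('p \<Rightarrow> 's) set" where
  "profiles N S \<equiv> PiE N S"

definition distrs :: "'p set \<Rightarrow> ('p \<Rightarrow> 's set) \<Rightarrow> (('p \<Rightarrow> 's) \<Rightarrow> real) set" where
  "distrs N S = {x. (\<forall>s\<in>profiles N S. x s \<ge> 0) \<and> (\<forall>s. s \<notin> profiles N S \<longrightarrow> x s = 0)
                   \<and> (\<Sum>s\<in>profiles N S. x s) = 1}"

definition exp_util :: "'p set \<Rightarrow> ('p \<Rightarrow> 's set) \<Rightarrow> ('p \<Rightarrow> ('p \<Rightarrow> 's) \<Rightarrow> real)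
    \<Rightarrow> 'p \<Rightarrow> (('p \<Rightarrow> 's) \<Rightarrow> real) \<Rightarrow> real" where
  "exp_util N S u p x = (\<Sum>s\<in>profiles N S. x s * u p s)"

text \<open>\<open>X^CE_P\<close>: distributions satisfying the correlated-equilibrium constraints of all players in P.
  The sum over \<open>s_{-p}\<close> of \<open>x(a, s_{-p})\<close> is the sum over profiles s with \<open>s p = a\<close>,
  and \<open>(b, s_{-p})\<close> is \<open>s(p := b)\<close>.\<close>
definition CE_set :: "'p set \<Rightarrow> ('p \<Rightarrow> 's set) \<Rightarrow> ('p \<Rightarrow> ('p \<Rightarrow> 's) \<Rightarrow> real) \<Rightarrow> 'p set
    \<Rightarrow> (('p \<Rightarrow> 's) \<Rightarrow> real) set" where
  "CE_set N S u P = {x \<in> distrs N S. \<forall>p\<in>P. \<forall>a\<in>S p. \<forall>b\<in>S p. a \<noteq> b \<longrightarrow>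
      (\<Sum>s\<in>{s\<in>profiles N S. s p = a}. x s * (u p s - u p (s(p := b)))) \<ge> 0}"

definition ordsubs :: "'p set \<Rightarrow> 'p list set" where
  "ordsubs P = {\<pi>. distinct \<pi> \<and> set \<pi> \<subseteq> P}"

definition stackelberg_game :: "'p set \<Rightarrow> ('p \<Rightarrow> 's set) \<Rightarrow> 'p set \<Rightarrow> 'p set \<Rightarrow> bool" where
  "stackelberg_game N S L F \<longleftrightarrow> finite_game N S \<and> L \<union> F = N \<and> L \<inter> F = {}"

text \<open>Bold X: families indexed by ordered subsets of L (entries at other lists are irrelevant).\<close>
definition bfX :: "'p set \<Rightarrow> ('p \<Rightarrow> 's set) \<Rightarrow> ('p \<Rightarrow> ('p \<Rightarrow> 's) \<Rightarrow> real) \<Rightarrow> 'p set \<Rightarrow> 'p set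
    \<Rightarrow> ('p list \<Rightarrow> ('p \<Rightarrow> 's) \<Rightarrow> real) set" where
  "bfX N S u L F = {x. \<forall>\<pi>\<in>ordsubs L. x \<pi> \<in> CE_set N S u (set \<pi> \<union> F)}"

definition stable_at :: "'p set \<Rightarrow> ('p \<Rightarrow> 's set) \<Rightarrow> ('p \<Rightarrow> ('p \<Rightarrow> 's) \<Rightarrow> real) \<Rightarrow> 'p set
    \<Rightarrow> ('p list \<Rightarrow> ('p \<Rightarrow> 's) \<Rightarrow> real) \<Rightarrow> 'p list \<Rightarrow> bool" where
  "stable_at N S u L x \<pi> \<longleftrightarrow>
     (\<forall>p\<in>L - set \<pi>. exp_util N S u p (x \<pi>) \<ge> exp_util N S u p (x (\<pi> @ [p])))"

definition perfectly_stable :: "'p set \<Rightarrow> ('p \<Rightarrow> 's set) \<Rightarrow> ('p \<Rightarrow> ('p \<Rightarrow> 's) \<Rightarrow> real) \<Rightarrow> 'p set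
    \<Rightarrow> 'p set \<Rightarrow> ('p list \<Rightarrow> ('p \<Rightarrow> 's) \<Rightarrow> real) set" where
  "perfectly_stable N S u L F =
     {x \<in> bfX N S u L F. \<forall>\<pi>\<in>ordsubs L. stable_at N S u L x \<pi>}"

end

theory Submission
  imports Defs
begin

text \<open>Take \<open>x'_\<pi> = x_{r(\<pi>)}\<close> for a reordering \<open>r\<close> of histories built bottom-up: \<open>r(\<pi>p)\<close> is
  \<open>r(\<rho>)p\<close> for the ordering \<open>\<rho>\<close> of the entries of \<open>\<pi>\<close> that is worst for \<open>p\<close>. This depends only
  on the set of entries of \<open>\<pi>\<close>, and perfect stability survives because
  \<open>u_p(x_{r(\<pi>p)}) \<le> u_p(x_{r(\<pi>)p}) \<le> u_p(x_{r(\<pi>)})\<close> by minimality and by stability of \<open>x\<close>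
  at \<open>r(\<pi>)\<close>. The correlated-equilibrium constraints only see the set of entries.\<close>

definition argmin_ordering :: "('a list \<Rightarrow> real) \<Rightarrow> 'a set \<Rightarrow> 'a list" where
  "argmin_ordering f A = arg_min_on f {\<rho>. distinct \<rho> \<and> set \<rho> = A}"

lemma argmin_ordering_if_finite:
  assumes "finite A"
  shows "distinct (argmin_ordering f A)" "set (argmin_ordering f A) = A"
    and "\<And>\<rho>. distinct \<rho> \<Longrightarrow> set \<rho> = A \<Longrightarrow> f (argmin_ordering f A) \<le> f \<rho>"
proof -
  let ?R = "{\<rho>. distinct \<rho> \<and> set \<rho> = A}"
  have "finite ?R"
    by (rule finite_subset[OF _ finite_subset_distinct[OF assms]]) auto
  moreover have "?R \<noteq> {}"
    using finite_distinct_list[OF assms] by auto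
  ultimately have "argmin_ordering f A \<in> ?R" "\<forall>\<rho>\<in>?R. \<not> f \<rho> < f (argmin_ordering f A)"
    using arg_min_if_finite unfolding argmin_ordering_def by blast+
  then show "distinct (argmin_ordering f A)" "set (argmin_ordering f A) = A"
    and "\<And>\<rho>. distinct \<rho> \<Longrightarrow> set \<rho> = A \<Longrightarrow> f (argmin_ordering f A) \<le> f \<rho>"
    by (auto simp: not_less)
qed

lemma length_argmin_ordering:
  "distinct \<pi> \<Longrightarrow> length (argmin_ordering f (set \<pi>)) = length \<pi>"
  using argmin_ordering_if_finite[where A = "set \<pi>" and f = f] by (metis List.finite_set distinct_card)

lemma argmin_ordering_cong:
  "(\<And>\<rho>. distinct \<rho> \<Longrightarrow> set \<rho> = A \<Longrightarrow> f \<rho> = g \<rho>) \<Longrightarrow> argmin_ordering f A = argmin_ordering g A"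
  unfolding argmin_ordering_def arg_min_on_def arg_min_def is_arg_min_def
  by (intro arg_cong[where f = Eps] ext) auto

text \<open>The recursion passes through a minimisation over all orderings of the prefix, so it is
  not structural; a fuel argument, instantiated with the length of the list, makes it primitive.\<close>

primrec reorder_fuel :: "('p \<Rightarrow> 'p list \<Rightarrow> real) \<Rightarrow> nat \<Rightarrow> 'p list \<Rightarrow> 'p list" where
  "reorder_fuel v 0 \<sigma> = []"
| "reorder_fuel v (Suc n) \<sigma> =
     reorder_fuel v n (argmin_ordering (\<lambda>\<rho>. v (last \<sigma>) (reorder_fuel v n \<rho> @ [last \<sigma>]))
       (set (butlast \<sigma>))) @ [last \<sigma>]"

definition reorder :: "('p \<Rightarrow> 'p list \<Rightarrow> real) \<Rightarrow> 'p list \<Rightarrow> 'p list" where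
  "reorder v \<sigma> = reorder_fuel v (length \<sigma>) \<sigma>"

lemma reorder_Nil [simp]: "reorder v [] = []"
  by (simp add: reorder_def)

lemma reorder_snoc:
  assumes "distinct \<pi>"
  shows "reorder v (\<pi> @ [p]) =
    reorder v (argmin_ordering (\<lambda>\<rho>. v p (reorder v \<rho> @ [p])) (set \<pi>)) @ [p]"
proof -
  have "argmin_ordering (\<lambda>\<rho>. v p (reorder_fuel v (length \<pi>) \<rho> @ [p])) (set \<pi>) =
        argmin_ordering (\<lambda>\<rho>. v p (reorder v \<rho> @ [p])) (set \<pi>)"
    by (rule argmin_ordering_cong) (metis assms distinct_card reorder_def)
  then show ?thesis
    using length_argmin_ordering[OF assms] by (simp add: reorder_def)
qed

lemma reorder_distinct_set:
  assumes "distinct \<pi>"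
  shows "distinct (reorder v \<pi>) \<and> set (reorder v \<pi>) = set \<pi>"
  using assms
proof (induction "length \<pi>" arbitrary: \<pi>)
  case 0
  then show ?case by simp
next
  case (Suc n)
  then obtain \<tau> p where \<pi>: "\<pi> = \<tau> @ [p]"
    by (metis length_0_conv nat.distinct(1) rev_exhaust)
  let ?\<rho> = "argmin_ordering (\<lambda>\<rho>. v p (reorder v \<rho> @ [p])) (set \<tau>)"
  have \<tau>: "distinct \<tau>" "p \<notin> set \<tau>" "length \<tau> = n"
    using Suc.prems Suc.hyps(2) \<pi> by auto
  have "distinct ?\<rho>" "set ?\<rho> = set \<tau>" "length ?\<rho> = n"
    using argmin_ordering_if_finite[where A = "set \<tau>"] length_argmin_ordering[OF \<tau>(1)] \<tau>(3) by auto
  with Suc.hyps(1) have "distinct (reorder v ?\<rho>) \<and> set (reorder v ?\<rho>) = set \<tau>"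
    by metis
  with \<tau> show ?case
    unfolding \<pi> reorder_snoc[OF \<tau>(1)] by auto
qed

lemma reorder_snoc_set_eq:
  assumes "distinct \<pi>" "distinct \<pi>'" "set \<pi> = set \<pi>'"
  shows "reorder v (\<pi> @ [p]) = reorder v (\<pi>' @ [p])"
  by (simp only: reorder_snoc[OF assms(1)] reorder_snoc[OF assms(2)] assms(3))

lemma reorder_snoc_le:
  assumes "distinct \<pi>"
  shows "v p (reorder v (\<pi> @ [p])) \<le> v p (reorder v \<pi> @ [p])"
  using argmin_ordering_if_finite(3)[where A = "set \<pi>" and f = "\<lambda>\<rho>. v p (reorder v \<rho> @ [p])" and \<rho> = \<pi>]
        reorder_snoc[OF assms] assms by simp

lemma reorder_ordsubs:
  "\<pi> \<in> ordsubs L \<Longrightarrow> reorder v \<pi> \<in> ordsubs L \<and> set (reorder v \<pi>) = set \<pi>"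
  using reorder_distinct_set[of \<pi> v] by (auto simp: ordsubs_def)

lemma bfX_comp_reorder:
  assumes "x \<in> bfX N S u L F"
  shows "x \<circ> reorder v \<in> bfX N S u L F"
  unfolding bfX_def
proof (intro CollectI ballI)
  fix \<pi> assume "\<pi> \<in> ordsubs L"
  with assms show "(x \<circ> reorder v) \<pi> \<in> CE_set N S u (set \<pi> \<union> F)"
    using reorder_ordsubs[of \<pi> L v] unfolding bfX_def by fastforce
qed

lemma stable_at_comp_reorder:
  assumes stable: "\<forall>\<pi>\<in>ordsubs L. stable_at N S u L x \<pi>"
    and \<pi>: "\<pi> \<in> ordsubs L"
  defines "v \<equiv> \<lambda>q \<rho>. exp_util N S u q (x \<rho>)"
  shows "stable_at N S u L (x \<circ> reorder v) \<pi>"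
  unfolding stable_at_def
proof
  fix p assume p: "p \<in> L - set \<pi>"
  have "v p (reorder v (\<pi> @ [p])) \<le> v p (reorder v \<pi> @ [p])"
    using reorder_snoc_le \<pi> by (auto simp: ordsubs_def)
  also have "\<dots> \<le> v p (reorder v \<pi>)"
    using stable reorder_ordsubs[OF \<pi>] p unfolding stable_at_def v_def by auto
  finally show "exp_util N S u p ((x \<circ> reorder v) (\<pi> @ [p])) \<le> exp_util N S u p ((x \<circ> reorder v) \<pi>)"
    by (simp add: v_def)
qed

theorem theorem6:
  fixes N L F :: "'p set" and S :: "'p \<Rightarrow> 's set" and u :: "'p \<Rightarrow> ('p \<Rightarrow> 's) \<Rightarrow> real"
    and x :: "'p list \<Rightarrow> ('p \<Rightarrow> 's) \<Rightarrow> real"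
  assumes "stackelberg_game N S L F"
    and "x \<in> perfectly_stable N S u L F"
  shows "\<exists>x'. x' \<in> perfectly_stable N S u L F \<and> x' [] = x [] \<and>
           (\<forall>p\<in>L. \<forall>\<pi>\<in>ordsubs (L - {p}). \<forall>\<pi>'\<in>ordsubs (L - {p}).
              set \<pi> = set \<pi>' \<longrightarrow> x' (\<pi> @ [p]) = x' (\<pi>' @ [p]))"
proof -
  define x' where "x' = x \<circ> reorder (\<lambda>q \<rho>. exp_util N S u q (x \<rho>))"
  have "x' \<in> perfectly_stable N S u L F"
    using assms(2) bfX_comp_reorder stable_at_comp_reorder
    unfolding perfectly_stable_def x'_def by blast
  moreover have "x' [] = x []"
    by (simp add: x'_def)
  moreover have "x' (\<pi> @ [p]) = x' (\<pi>' @ [p])"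
    if "\<pi> \<in> ordsubs (L - {p})" "\<pi>' \<in> ordsubs (L - {p})" "set \<pi> = set \<pi>'" for p \<pi> \<pi>'
    using that reorder_snoc_set_eq unfolding x'_def ordsubs_def by (metis (no_types) comp_apply mem_Collect_eq)
  ultimately show ?thesis
    by blast
qed

end
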